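(* Let $F$ be a finite extension of $\mathbb{Q}_p$ with ring of integers $\mathcal{O}_F$ and uniformiser $\pi$, let $n\ge1$, $m\ge1$, $G=\mathrm{GL}_n(F)$, $G_m=1+\pi^mM_n(\mathcal{O}_F)$ and $G^m=\det^{-1}(1+\pi^m\mathcal{O}_F)\subset G$. Then the normal closure of $G_m$ in $G$ (the smallest normal subgroup of $G$ containing $G_m$) is $G^m$. *)

theory Defs
  imports "HOL-Analysis.Analysis" "HOL-Algebra.Coset"
begin

text \<open>A normalised discrete valuation on a field, given on nonzero elements
  (the value at 0 is irrelevant and never used; conventionally it is +infinity).\<close>
definition discrete_valuation :: "('a::field \<Rightarrow> int) \<Rightarrow> bool" where
  "discrete_valuation v \<longleftrightarrow>
     (\<forall>x y. x \<noteq> 0 \<and> y \<noteq> 0 \<longrightarrow> v (x * y) = v x + v y) \<and>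
     (\<forall>x y. x \<noteq> 0 \<and> y \<noteq> 0 \<and> x + y \<noteq> 0 \<longrightarrow> min (v x) (v y) \<le> v (x + y)) \<and>
     (\<exists>x. x \<noteq> 0 \<and> v x = 1)"

definition val_ring :: "('a::field \<Rightarrow> int) \<Rightarrow> 'a set" where
  "val_ring v = {x. x = 0 \<or> 0 \<le> v x}"

definition val_cauchy :: "('a::field \<Rightarrow> int) \<Rightarrow> (nat \<Rightarrow> 'a) \<Rightarrow> bool" where
  "val_cauchy v X \<longleftrightarrow>
     (\<forall>k::int. \<exists>N. \<forall>i\<ge>N. \<forall>j\<ge>N. X i = X j \<or> k \<le> v (X i - X j))"

definition val_converges_to :: "('a::field \<Rightarrow> int) \<Rightarrow> (nat \<Rightarrow> 'a) \<Rightarrow> 'a \<Rightarrow> bool" where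
  "val_converges_to v X L \<longleftrightarrow> (\<forall>k::int. \<exists>N. \<forall>i\<ge>N. X i = L \<or> k \<le> v (X i - L))"

definition val_complete :: "('a::field \<Rightarrow> int) \<Rightarrow> bool" where
  "val_complete v \<longleftrightarrow> (\<forall>X. val_cauchy v X \<longrightarrow> (\<exists>L. val_converges_to v X L))"

definition uniformiser :: "('a::field \<Rightarrow> int) \<Rightarrow> 'a \<Rightarrow> bool" where
  "uniformiser v \<pi> \<longleftrightarrow> \<pi> \<noteq> 0 \<and> v \<pi> = 1"

text \<open>The residue field O / pi O is finite: finitely many residue classes.\<close>
definition finite_residue_field :: "('a::field \<Rightarrow> int) \<Rightarrow> bool" where
  "finite_residue_field v \<longleftrightarrow>
     (\<exists>R. finite R \<and> R \<subseteq> val_ring v \<and>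
        (\<forall>x\<in>val_ring v. \<exists>r\<in>R. x = r \<or> 1 \<le> v (x - r)))"

text \<open>A finite extension of Q_p (for some p): a field of characteristic 0 which is
  complete with respect to a discrete valuation with finite residue field
  (i.e. a non-archimedean local field of characteristic 0).\<close>
definition p_adic_local_field :: "('a::field_char_0 \<Rightarrow> int) \<Rightarrow> bool" where
  "p_adic_local_field v \<longleftrightarrow>
     discrete_valuation v \<and> val_complete v \<and> finite_residue_field v"

text \<open>The group GL_n(F), n = CARD('n).\<close>
definition GL :: "('a::field ^'n::finite^'n) monoid" where
  "GL = \<lparr>carrier = {A. invertible A}, mult = (**), one = mat 1\<rparr>"

definition ideal_pow :: "('a::field \<Rightarrow> int) \<Rightarrow> 'a \<Rightarrow> nat \<Rightarrow> 'a set" where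
  "ideal_pow v \<pi> m = {\<pi> ^ m * x | x. x \<in> val_ring v}"

definition congruence_subgroup ::
  "('a::field \<Rightarrow> int) \<Rightarrow> 'a \<Rightarrow> nat \<Rightarrow> ('a^'n::finite^'n) set" where
  "congruence_subgroup v \<pi> m =
     {A. \<forall>i j. A $ i $ j - mat 1 $ i $ j \<in> ideal_pow v \<pi> m}"

definition det_congruence_subgroup ::
  "('a::field \<Rightarrow> int) \<Rightarrow> 'a \<Rightarrow> nat \<Rightarrow> ('a^'n::finite^'n) set" where
  "det_congruence_subgroup v \<pi> m =
     {A \<in> carrier GL. det A - 1 \<in> ideal_pow v \<pi> m}"

definition normal_closure :: "('g, 'b) monoid_scheme \<Rightarrow> 'g set \<Rightarrow> 'g set" where
  "normal_closure G S = \<Inter> {N. N \<lhd> G \<and> S \<subseteq> N}"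

end

theory Submission
  imports Defs "HOL-Algebra.Generated_Groups"
begin

(* G_m lies in G^m because a matrix congruent to 1 modulo pi^m has determinant congruent to 1
   modulo pi^m (Leibniz formula), and G^m is normal, being the preimage under det of the subgroup
   1 + pi^m O of the units.  Conversely, a normal subgroup N containing G_m contains the
   transvection 1 + pi^m E_pq, hence, conjugating by diagonal matrices, every transvection and
   so the whole subgroup they generate.  Gaussian elimination by transvections writes every
   invertible A as such a product times diag(1, ..., 1, det A), and this diagonal matrix lies
   in G_m when A lies in G^m. *)

definition val_ideal :: "('a::field \<Rightarrow> int) \<Rightarrow> nat \<Rightarrow> 'a set" where
  "val_ideal v m = {x. x = 0 \<or> int m \<le> v x}"

locale valued_field =
  fixes v :: "'a::field \<Rightarrow> int"
  assumes discrete_valuation: "discrete_valuation v"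
begin

lemma val_mult: "x \<noteq> 0 \<Longrightarrow> y \<noteq> 0 \<Longrightarrow> v (x * y) = v x + v y"
  using discrete_valuation unfolding discrete_valuation_def by blast

lemma val_add: "x \<noteq> 0 \<Longrightarrow> y \<noteq> 0 \<Longrightarrow> x + y \<noteq> 0 \<Longrightarrow> min (v x) (v y) \<le> v (x + y)"
  using discrete_valuation unfolding discrete_valuation_def by blast

lemma val_one [simp]: "v 1 = 0"
  using val_mult[of 1 1] by simp

lemma val_minus [simp]: "v (- x) = v x"
proof (cases "x = 0")
  case False
  have "v (-1) = 0"
    using val_mult[of "-1" "-1"] by simp
  with False show ?thesis
    using val_mult[of "-1" x] by simp
qed simp

lemma val_inverse: "x \<noteq> 0 \<Longrightarrow> v (inverse x) = - v x"
  using val_mult[of x "inverse x"] by simp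

lemma val_power: "x \<noteq> 0 \<Longrightarrow> v (x ^ k) = int k * v x"
  by (induction k) (simp_all add: val_mult algebra_simps)

lemma ideal_pow_eq_val_ideal:
  assumes "uniformiser v \<pi>"
  shows "ideal_pow v \<pi> m = val_ideal v m"
proof -
  have \<pi>: "\<pi> ^ m \<noteq> 0" "v (\<pi> ^ m) = int m"
    using assms by (simp_all add: uniformiser_def val_power)
  have "x \<in> ideal_pow v \<pi> m \<longleftrightarrow> x / \<pi> ^ m \<in> val_ring v" for x
  proof
    assume "x / \<pi> ^ m \<in> val_ring v"
    moreover have "x = \<pi> ^ m * (x / \<pi> ^ m)"
      using \<pi> by simp
    ultimately show "x \<in> ideal_pow v \<pi> m"
      unfolding ideal_pow_def by blast
  qed (use \<pi> in \<open>auto simp: ideal_pow_def\<close>)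
  moreover have "x / \<pi> ^ m \<in> val_ring v \<longleftrightarrow> x \<in> val_ideal v m" for x
    using \<pi> val_mult[of x "inverse (\<pi> ^ m)"]
    by (cases "x = 0") (auto simp: val_ring_def val_ideal_def divide_inverse val_inverse)
  ultimately show ?thesis
    by blast
qed

lemma zero_in_val_ideal [simp]: "0 \<in> val_ideal v m"
  by (simp add: val_ideal_def)

lemma one_in_val_ideal_iff [simp]: "1 \<in> val_ideal v m \<longleftrightarrow> m = 0"
  by (simp add: val_ideal_def)

lemma val_ideal_antimono: "k \<le> m \<Longrightarrow> val_ideal v m \<subseteq> val_ideal v k"
  by (auto simp: val_ideal_def)

lemma val_ideal_minus: "x \<in> val_ideal v m \<Longrightarrow> - x \<in> val_ideal v m"
  by (simp add: val_ideal_def)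

lemma val_ideal_add: "x \<in> val_ideal v m \<Longrightarrow> y \<in> val_ideal v m \<Longrightarrow> x + y \<in> val_ideal v m"
  unfolding val_ideal_def using val_add[of x y] by fastforce

lemma val_ideal_mult: "x \<in> val_ideal v a \<Longrightarrow> y \<in> val_ideal v b \<Longrightarrow> x * y \<in> val_ideal v (a + b)"
  unfolding val_ideal_def using val_mult[of x y] by fastforce

lemma val_ideal_sum:
  "(\<And>i. i \<in> F \<Longrightarrow> f i \<in> val_ideal v m) \<Longrightarrow> sum f F \<in> val_ideal v m"
  by (induction F rule: infinite_finite_induct) (auto intro: val_ideal_add)

lemma val_ideal_prod:
  "(\<And>i. i \<in> F \<Longrightarrow> f i \<in> val_ideal v 0) \<Longrightarrow> prod f F \<in> val_ideal v 0"
  by (induction F rule: infinite_finite_induct) (auto intro: val_ideal_mult[of _ 0 _ 0, simplified])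

lemma val_ideal_prod_diff:
  assumes "\<And>i. i \<in> F \<Longrightarrow> f i \<in> val_ideal v 0" "\<And>i. i \<in> F \<Longrightarrow> g i \<in> val_ideal v 0"
    and "\<And>i. i \<in> F \<Longrightarrow> f i - g i \<in> val_ideal v m"
  shows "prod f F - prod g F \<in> val_ideal v m"
  using assms
proof (induction F rule: infinite_finite_induct)
  case (insert x F)
  have "prod f (insert x F) - prod g (insert x F)
      = (f x - g x) * prod f F + g x * (prod f F - prod g F)"
    using insert.hyps by (simp add: algebra_simps)
  moreover have "(f x - g x) * prod f F \<in> val_ideal v m"
    using insert val_ideal_mult[of "f x - g x" m "prod f F" 0] val_ideal_prod[of F f] by simp
  moreover have "g x * (prod f F - prod g F) \<in> val_ideal v m"
    using insert val_ideal_mult[of "g x" 0 "prod f F - prod g F" m] by simp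
  ultimately show ?case
    by (simp add: val_ideal_add)
qed simp_all

lemma det_diff_in_val_ideal:
  fixes A B :: "'a^'n::finite^'n"
  assumes "\<And>i j. A $ i $ j \<in> val_ideal v 0" "\<And>i j. B $ i $ j \<in> val_ideal v 0"
    and "\<And>i j. A $ i $ j - B $ i $ j \<in> val_ideal v m"
  shows "det A - det B \<in> val_ideal v m"
proof -
  have sign: "of_int (sign p) \<in> val_ideal v 0" for p :: "'n \<Rightarrow> 'n"
    by (auto simp: sign_def val_ideal_def)
  have "det A - det B = (\<Sum>p | p permutes (UNIV :: 'n set). of_int (sign p) *
          ((\<Prod>i\<in>UNIV. A $ i $ p i) - (\<Prod>i\<in>UNIV. B $ i $ p i)))"
    unfolding det_def by (simp add: sum_subtractf right_diff_distrib)
  also have "\<dots> \<in> val_ideal v m"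
  proof (rule val_ideal_sum)
    fix p :: "'n \<Rightarrow> 'n"
    have "(\<Prod>i\<in>UNIV. A $ i $ p i) - (\<Prod>i\<in>UNIV. B $ i $ p i) \<in> val_ideal v m"
      using assms by (intro val_ideal_prod_diff)
    then show "of_int (sign p) * ((\<Prod>i\<in>UNIV. A $ i $ p i) - (\<Prod>i\<in>UNIV. B $ i $ p i)) \<in> val_ideal v m"
      using val_ideal_mult[OF sign] by fastforce
  qed
  finally show ?thesis .
qed

lemma principal_unit_nonzero: "m \<ge> 1 \<Longrightarrow> x - 1 \<in> val_ideal v m \<Longrightarrow> x \<noteq> 0"
  by (auto simp: val_ideal_def)

lemma principal_unit_mult:
  assumes "x - 1 \<in> val_ideal v m" "y - 1 \<in> val_ideal v m"
  shows "x * y - 1 \<in> val_ideal v m"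
proof -
  have "y \<in> val_ideal v 0"
    using val_ideal_add[of "y - 1" 0 1] val_ideal_antimono[of 0 m] assms(2) by auto
  then have "(x - 1) * y \<in> val_ideal v m"
    using val_ideal_mult[OF assms(1)] by fastforce
  moreover have "x * y - 1 = (x - 1) * y + (y - 1)"
    by (simp add: algebra_simps)
  ultimately show ?thesis
    using assms(2) val_ideal_add by metis
qed

lemma principal_unit_inverse:
  assumes "m \<ge> 1" "x - 1 \<in> val_ideal v m"
  shows "inverse x - 1 \<in> val_ideal v m"
proof -
  have "x \<noteq> 0"
    using assms by (rule principal_unit_nonzero)
  have "v x = 0"
  proof (cases "x - 1 = 0")
    case False
    with assms have "1 \<le> v (x - 1)"
      by (auto simp: val_ideal_def)
    moreover have "v (1 - x) = v (x - 1)"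
      using val_minus[of "x - 1"] by simp
    ultimately show ?thesis
      using val_add[of "x - 1" 1] val_add[of x "1 - x"] \<open>x \<noteq> 0\<close> False
      by (simp add: min_def split: if_splits)
  qed simp
  then have "inverse x \<in> val_ideal v 0"
    using \<open>x \<noteq> 0\<close> by (simp add: val_ideal_def val_inverse)
  moreover have "inverse x - 1 = - (x - 1) * inverse x"
    using \<open>x \<noteq> 0\<close> by (simp add: field_simps)
  ultimately show ?thesis
    using val_ideal_mult[OF val_ideal_minus[OF assms(2)]] by fastforce
qed

end

lemma GL_simps [simp]: "carrier GL = {A. invertible A}" "mult GL = (**)" "one GL = mat 1"
  by (simp_all add: GL_def)

lemma invertible_mat_1: "invertible (mat 1 :: 'a::comm_ring_1^'n^'n)"
  unfolding invertible_def by auto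

lemma group_GL: "group (GL :: ('a::field^'n::finite^'n) monoid)"
proof -
  have "monoid (GL :: ('a^'n^'n) monoid)"
    by (rule monoidI) (auto simp: invertible_mult matrix_mul_assoc invertible_mat_1)
  then show ?thesis
  proof (rule monoid.group_l_invI)
    fix A :: "'a^'n^'n"
    assume "A \<in> carrier GL"
    then obtain B where "A ** B = mat 1" "B ** A = mat 1"
      by (auto simp: invertible_def)
    then show "\<exists>B\<in>carrier GL. B \<otimes>\<^bsub>GL\<^esub> A = \<one>\<^bsub>GL\<^esub>"
      by (auto simp: invertible_def)
  qed
qed

lemma det_GL_inv:
  assumes "(A :: 'a::field^'n::finite^'n) \<in> carrier GL"
  shows "det (inv\<^bsub>GL\<^esub> A) = inverse (det A)"
proof -
  interpret group GL by (rule group_GL)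
  have "det A * det (inv\<^bsub>GL\<^esub> A) = 1"
    using r_inv[OF assms] by (metis GL_simps(2,3) det_I det_mul)
  then show ?thesis
    by (rule inverse_unique[symmetric])
qed

lemma det_preimage_normal:
  fixes U :: "'a::field set"
  assumes "1 \<in> U" and "\<And>x y. x \<in> U \<Longrightarrow> y \<in> U \<Longrightarrow> x * y \<in> U"
    and "\<And>x. x \<in> U \<Longrightarrow> inverse x \<in> U"
  shows "{A \<in> carrier (GL :: ('a^'n::finite^'n) monoid). det A \<in> U} \<lhd> GL"
proof -
  interpret group "GL :: ('a^'n^'n) monoid" by (rule group_GL)
  let ?H = "{A \<in> carrier (GL :: ('a^'n::finite^'n) monoid). det A \<in> U}"
  have "subgroup ?H GL"
  proof (rule subgroupI)
    show "?H \<noteq> {}"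
      using assms(1) invertible_mat_1 by fastforce
    show "inv\<^bsub>GL\<^esub> A \<in> ?H" if "A \<in> ?H" for A
      using that inv_closed[of A] assms(3) by (simp add: det_GL_inv del: GL_simps)
    show "A \<otimes>\<^bsub>GL\<^esub> B \<in> ?H" if "A \<in> ?H" "B \<in> ?H" for A B
      using that m_closed[of A B] assms(2)[of "det A" "det B"] by (auto simp: det_mul)
  qed auto
  moreover have "X \<otimes>\<^bsub>GL\<^esub> A \<otimes>\<^bsub>GL\<^esub> inv\<^bsub>GL\<^esub> X \<in> ?H" if "X \<in> carrier GL" "A \<in> ?H" for X A
  proof -
    have "det (X \<otimes>\<^bsub>GL\<^esub> A \<otimes>\<^bsub>GL\<^esub> inv\<^bsub>GL\<^esub> X) = det A"
      using that det_GL_inv[of X] by (simp add: det_mul invertible_det_nz)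
    then show ?thesis
      using that by (simp del: GL_simps)
  qed
  ultimately show ?thesis
    by (simp add: normal_inv_iff)
qed

(* 1 + c E_pq; an elementary transvection only when p \<noteq> q *)
definition transvection :: "'n::finite \<Rightarrow> 'n \<Rightarrow> 'a::comm_ring_1 \<Rightarrow> 'a^'n^'n" where
  "transvection p q c = (\<chi> i j. (if i = j then 1 else 0) + (if i = p \<and> j = q then c else 0))"

definition dilation :: "'n::finite \<Rightarrow> 'a::comm_ring_1 \<Rightarrow> 'a^'n^'n" where
  "dilation k c = (\<chi> i j. if i = j then (if i = k then c else 1) else 0)"

lemma transvection_mult:
  "transvection p q c ** A = (\<chi> i j. A $ i $ j + (if i = p then c * A $ q $ j else 0))"
  by (simp add: vec_eq_iff matrix_matrix_mult_def transvection_def distrib_right sum.distrib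
      if_distrib[of "\<lambda>x. x * _"] cong: if_cong)

lemma dilation_mult: "dilation k c ** A = (\<chi> i j. (if i = k then c else 1) * A $ i $ j)"
  by (simp add: vec_eq_iff matrix_matrix_mult_def dilation_def if_distrib[of "\<lambda>x. x * _"]
      cong: if_cong)

lemma mult_dilation: "A ** dilation k c = (\<chi> i j. A $ i $ j * (if j = k then c else 1))"
  by (simp add: vec_eq_iff matrix_matrix_mult_def dilation_def if_distrib[of "\<lambda>x. _ * x"]
      cong: if_cong)

lemma transvection_zero [simp]: "transvection p q 0 = mat 1"
  by (simp add: vec_eq_iff transvection_def mat_def)

lemma det_transvection:
  assumes "p \<noteq> q"
  shows "det (transvection p q c) = 1"
proof -
  have "transvection p q c
      = (\<chi> k. if k = p then row p (mat 1) + c *s row q (mat 1) else row k (mat 1))"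
    using assms by (simp add: vec_eq_iff transvection_def row_def mat_def)
  then show ?thesis
    using det_row_operation[OF assms, of "mat 1" c] by simp
qed

lemma det_dilation [simp]: "det (dilation k c) = c"
proof -
  have "det (dilation k c) = (\<Prod>i\<in>UNIV. if i = k then c else 1)"
    by (simp add: det_diagonal dilation_def)
  then show ?thesis
    by (simp add: prod.If_cases)
qed

lemma dilation_one [simp]: "dilation k 1 = mat 1"
  by (simp add: vec_eq_iff dilation_def mat_def)

lemma dilation_mult_dilation: "dilation k a ** dilation k b = dilation k (a * b)"
  using dilation_mult[of k a "dilation k b"] by (simp add: vec_eq_iff dilation_def)

lemma dilation_conj_transvection:
  fixes t :: "'a::field"
  assumes "p \<noteq> q" "t \<noteq> 0"
  shows "dilation p t ** transvection p q c ** dilation p (inverse t) = transvection p q (t * c)"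
  using assms by (simp add: vec_eq_iff dilation_mult mult_dilation transvection_def)

lemma invertible_transvection:
  "p \<noteq> q \<Longrightarrow> invertible (transvection p q (c :: 'a::field))"
  by (simp add: invertible_det_nz det_transvection)

lemma invertible_dilation: "c \<noteq> 0 \<Longrightarrow> invertible (dilation k (c :: 'a::field))"
  by (simp add: invertible_det_nz)

lemma GL_inv_dilation:
  assumes "(c :: 'a::field) \<noteq> 0"
  shows "inv\<^bsub>GL\<^esub> (dilation k c) = dilation k (inverse c)"
  using assms group.inv_equality[OF group_GL, of "dilation k (inverse c)" "dilation k c"]
  by (simp add: dilation_mult_dilation invertible_dilation)

lemma normal_subgroup_transvection:
  fixes c d :: "'a::field"
  assumes N: "N \<lhd> GL" and "p \<noteq> q" "c \<noteq> 0" and "transvection p q c \<in> N"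
  shows "transvection p q d \<in> N"
proof (cases "d = 0")
  case True
  then show ?thesis
    using subgroup.one_closed[OF normal_imp_subgroup[OF N]] by simp
next
  case False
  let ?t = "d / c"
  have "?t \<noteq> 0" "?t * c = d"
    using False \<open>c \<noteq> 0\<close> by simp_all
  then have "dilation p ?t \<otimes>\<^bsub>GL\<^esub> transvection p q c \<otimes>\<^bsub>GL\<^esub> inv\<^bsub>GL\<^esub> dilation p ?t
      = transvection p q d"
    using dilation_conj_transvection[OF \<open>p \<noteq> q\<close> \<open>?t \<noteq> 0\<close>, of c]
    by (simp add: GL_inv_dilation[OF \<open>?t \<noteq> 0\<close>])
  moreover have "dilation p ?t \<in> carrier GL"
    using \<open>?t \<noteq> 0\<close> by (simp add: invertible_dilation)
  ultimately show ?thesis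
    using normal.inv_op_closed2[OF N _ assms(4)] by metis
qed

definition transvections :: "('a::field^'n::finite^'n) set" where
  "transvections = {transvection p q c | p q c. p \<noteq> q}"

lemma transvections_subset_SL: "transvections \<subseteq> {A \<in> carrier GL. det A = 1}"
  by (auto simp: transvections_def invertible_transvection det_transvection)

lemma det_generate_transvections:
  assumes "E \<in> generate GL transvections"
  shows "det E = 1"
proof -
  have "{A \<in> carrier GL. det A \<in> {1}} \<lhd> (GL :: ('a^'n^'n) monoid)"
    by (rule det_preimage_normal) auto
  then have "generate GL transvections \<subseteq> {A \<in> carrier GL. det A = (1 :: 'a)}"
    using group.generate_subgroup_incl[OF group_GL transvections_subset_SL] normal_imp_subgroup
    by force
  then show ?thesis
    using assms by blast
qed

definition row_reduces :: "'a::field^'n::finite^'n \<Rightarrow> 'a^'n^'n \<Rightarrow> bool" where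
  "row_reduces A B \<longleftrightarrow> (\<exists>E\<in>generate GL transvections. B = E ** A)"

lemma row_reduces_refl: "row_reduces A A"
  unfolding row_reduces_def using generate.one[of GL transvections] by force

lemma row_reduces_trans: "row_reduces A B \<Longrightarrow> row_reduces B C \<Longrightarrow> row_reduces A C"
  unfolding row_reduces_def using generate.eng[of _ GL transvections]
  by (metis GL_simps(2) matrix_mul_assoc)

lemma row_reduces_transvection:
  "row_reduces A B \<Longrightarrow> p \<noteq> q \<Longrightarrow> row_reduces A (transvection p q c ** B)"
  using row_reduces_trans generate.incl[of _ transvections GL]
  by (fastforce simp: row_reduces_def transvections_def)

lemma row_reduces_det: "row_reduces A B \<Longrightarrow> det B = det A"
  by (auto simp: row_reduces_def det_mul det_generate_transvections)

lemma row_reduces_invertible: "row_reduces A B \<Longrightarrow> invertible A \<Longrightarrow> invertible B"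
  by (simp add: invertible_det_nz row_reduces_det)

definition identity_columns :: "'n::finite set \<Rightarrow> 'a::field^'n^'n \<Rightarrow> bool" where
  "identity_columns K A \<longleftrightarrow> (\<forall>i. \<forall>l\<in>K. A $ i $ l = (if i = l then 1 else 0))"

lemma identity_columns_transvection:
  "identity_columns K A \<Longrightarrow> q \<notin> K \<Longrightarrow> identity_columns K (transvection p q c ** A)"
  by (auto simp: identity_columns_def transvection_mult)

lemma invertible_pivot_exists:
  fixes A :: "'a::field^'n::finite^'n"
  assumes "invertible A" "identity_columns K A" "j \<notin> K"
  shows "\<exists>q. q \<notin> K \<and> A $ q $ j \<noteq> 0"
proof (rule ccontr)
  assume "\<not> ?thesis"
  then have zero: "A $ i $ j = 0" if "i \<notin> K" for i
    using that by blast
  \<comment> \<open>otherwise \<open>e\<^sub>j - (\<Sum>l\<in>K. A\<^sub>l\<^sub>j e\<^sub>l)\<close> is a nonzero vector in the kernel of \<open>A\<close>\<close>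
  define x :: "'a^'n" where "x = (\<chi> l. if l = j then 1 else if l \<in> K then - A $ l $ j else 0)"
  have "(A *v x) $ i = 0" for i
  proof -
    have "(A *v x) $ i = (\<Sum>l\<in>UNIV. A $ i $ l * x $ l)"
      by (simp add: matrix_vector_mult_def)
    also have "\<dots> = (\<Sum>l\<in>UNIV. (if l = j then A $ i $ j else 0)
                      - (if l = i then (if i \<in> K then A $ i $ j else 0) else 0))"
      using assms(2,3) by (intro sum.cong) (auto simp: x_def identity_columns_def)
    also have "\<dots> = A $ i $ j - (if i \<in> K then A $ i $ j else 0)"
      by (simp add: sum_subtractf)
    also have "\<dots> = 0"
      using zero by simp
    finally show ?thesis .
  qed
  then have "A *v x = 0"
    by (simp add: vec_eq_iff)
  moreover have "x \<noteq> 0"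
    by (auto simp: x_def vec_eq_iff)
  ultimately show False
    using assms(1) by (meson invertible_left_inverse matrix_left_invertible_ker)
qed

lemma unit_pivot_from_row:
  assumes "identity_columns K A" "q \<notin> K" "q \<noteq> j" "A $ q $ j \<noteq> 0"
  obtains B where "row_reduces A B" "identity_columns K B" "B $ j $ j = 1"
proof
  let ?B = "transvection j q ((1 - A $ j $ j) / A $ q $ j) ** A"
  show "row_reduces A ?B"
    using assms(3) row_reduces_refl row_reduces_transvection by metis
  show "identity_columns K ?B"
    using assms(1,2) by (rule identity_columns_transvection)
  show "?B $ j $ j = 1"
    using assms(4) by (simp add: transvection_mult)
qed

lemma unit_pivot:
  assumes "invertible A" "identity_columns K A" "j \<notin> K" "r \<notin> K" "r \<noteq> j"
  obtains B where "row_reduces A B" "identity_columns K B" "B $ j $ j = 1"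
proof -
  obtain q where q: "q \<notin> K" "A $ q $ j \<noteq> 0"
    using invertible_pivot_exists[OF assms(1-3)] by blast
  show ?thesis
  proof (cases "q = j")
    case True
    let ?A' = "transvection r j ((1 - A $ r $ j) / A $ j $ j) ** A"
    have "row_reduces A ?A'"
      using assms(5) row_reduces_refl row_reduces_transvection by metis
    moreover have "identity_columns K ?A'"
      using assms(2,3) by (rule identity_columns_transvection)
    moreover have "?A' $ r $ j \<noteq> 0"
      using q True by (simp add: transvection_mult)
    ultimately show ?thesis
      using unit_pivot_from_row[of K ?A' r j] assms(4,5) that row_reduces_trans by metis
  next
    case False
    then show ?thesis
      using unit_pivot_from_row[OF assms(2) q(1) False q(2)] that by blast
  qed
qed

lemma clear_column:
  assumes "identity_columns K A" "j \<notin> K" "A $ j $ j \<noteq> 0"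
  obtains B where "row_reduces A B" "identity_columns K B" "B $ j $ j = A $ j $ j"
    "\<And>i. i \<noteq> j \<Longrightarrow> B $ i $ j = 0"
proof -
  have "\<exists>B. row_reduces A B \<and> identity_columns K B \<and> B $ j $ j = A $ j $ j
          \<and> (\<forall>i. i \<noteq> j \<longrightarrow> B $ i $ j = 0)"
    if "finite I" "identity_columns K A" "A $ j $ j \<noteq> 0"
      "\<forall>i. i \<notin> I \<and> i \<noteq> j \<longrightarrow> A $ i $ j = 0"
    for I A
    using that
  proof (induction I arbitrary: A rule: finite_induct)
    case empty
    then show ?case
      using row_reduces_refl by blast
  next
    case (insert i I)
    show ?case
    proof (cases "i = j")
      case True
      then have "\<forall>l. l \<notin> I \<and> l \<noteq> j \<longrightarrow> A $ l $ j = 0"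
        using insert.prems(3) by blast
      then show ?thesis
        using insert.IH insert.prems(1,2) by blast
    next
      case False
      define A' where "A' = transvection i j (- A $ i $ j / A $ j $ j) ** A"
      have red: "row_reduces A A'"
        unfolding A'_def using row_reduces_refl False by (rule row_reduces_transvection)
      have "identity_columns K A'"
        unfolding A'_def using insert.prems(1) assms(2) by (rule identity_columns_transvection)
      moreover have piv: "A' $ j $ j = A $ j $ j"
        using False by (simp add: A'_def transvection_mult)
      moreover have "\<forall>l. l \<notin> I \<and> l \<noteq> j \<longrightarrow> A' $ l $ j = 0"
        using False insert.prems(2,3) by (auto simp: A'_def transvection_mult)
      ultimately obtain B where "row_reduces A' B" "identity_columns K B" "B $ j $ j = A $ j $ j"
          "\<forall>l. l \<noteq> j \<longrightarrow> B $ l $ j = 0"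
        using insert.IH insert.prems(2) by force
      then show ?thesis
        using row_reduces_trans[OF red] by blast
    qed
  qed
  from this[of UNIV A] assms show ?thesis
    using that by auto
qed

lemma row_reduces_identity_columns:
  fixes A :: "'a::field^'n::finite^'n"
  assumes "invertible A" "k \<notin> K"
  shows "\<exists>B. row_reduces A B \<and> identity_columns K B"
proof -
  have "finite K"
    by simp
  \<comment> \<open>\<open>k\<close> stays outside \<open>K\<close> to serve as the spare row \<open>r\<close> of \<open>unit_pivot\<close>\<close>
  then show ?thesis
    using assms(2)
  proof (induction K rule: finite_induct)
    case empty
    then show ?case
      using row_reduces_refl by (auto simp: identity_columns_def)
  next
    case (insert j K)
    then obtain X where X: "row_reduces A X" "identity_columns K X"
      by blast
    obtain Y where Y: "row_reduces X Y" "identity_columns K Y" "Y $ j $ j = 1"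
      using unit_pivot[OF row_reduces_invertible[OF X(1) assms(1)] X(2), of j k] insert by auto
    obtain B where B: "row_reduces Y B" "identity_columns K B" "B $ j $ j = 1"
        "\<And>i. i \<noteq> j \<Longrightarrow> B $ i $ j = 0"
      using clear_column[OF Y(2) \<open>j \<notin> K\<close>] Y(3) by auto
    have "identity_columns (insert j K) B"
      using B(2-4) by (auto simp: identity_columns_def)
    then show ?case
      using X(1) Y(1) B(1) row_reduces_trans by blast
  qed
qed

lemma row_reduces_dilation:
  fixes A :: "'a::field^'n::finite^'n"
  assumes "invertible A"
  shows "row_reduces A (dilation k (det A))"
proof -
  obtain X where X: "row_reduces A X" "identity_columns (- {k}) X"
    using row_reduces_identity_columns[OF assms, of k "- {k}"] by auto
  have "X $ k $ k \<noteq> 0"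
    using invertible_pivot_exists[OF row_reduces_invertible[OF X(1) assms] X(2), of k] by auto
  then obtain B where B: "row_reduces X B" "identity_columns (- {k}) B" "B $ k $ k = X $ k $ k"
      "\<And>i. i \<noteq> k \<Longrightarrow> B $ i $ k = 0"
    using clear_column[OF X(2), of k] by auto
  have "B $ i $ l = dilation k (X $ k $ k) $ i $ l" for i l
  proof (cases "l = k")
    case True
    then show ?thesis
      using B(3) B(4)[of i] by (cases "i = k") (simp_all add: dilation_def)
  next
    case False
    then show ?thesis
      using B(2) by (simp add: identity_columns_def dilation_def)
  qed
  then have B_eq: "B = dilation k (X $ k $ k)"
    by (simp add: vec_eq_iff)
  have "row_reduces A B"
    using X(1) B(1) by (rule row_reduces_trans)
  moreover from this have "det A = X $ k $ k"
    using row_reduces_det B_eq by force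
  ultimately show ?thesis
    using B_eq by simp
qed

lemma subgroup_GL_memI:
  assumes N: "subgroup N GL" and "transvections \<subseteq> N"
    and "invertible A" and "dilation k (det A) \<in> N"
  shows "A \<in> N"
proof -
  interpret GL: group GL
    by (rule group_GL)
  obtain E where E: "E \<in> generate GL transvections" "dilation k (det A) = E ** A"
    using row_reduces_dilation[OF assms(3)] unfolding row_reduces_def by blast
  have "E \<in> N"
    using GL.generate_subgroup_incl[OF assms(2) N] E(1) by blast
  moreover have "A \<in> carrier GL" "dilation k (det A) \<in> carrier GL"
    using assms(3,4) subgroup.mem_carrier[OF N] by auto
  ultimately have "A = inv\<^bsub>GL\<^esub> E \<otimes>\<^bsub>GL\<^esub> dilation k (det A)"
    using subgroup.mem_carrier[OF N] by (intro GL.inv_solve_left[THEN iffD2]) (simp_all add: E(2))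
  then show ?thesis
    using \<open>E \<in> N\<close> assms(4) subgroup.m_closed[OF N] subgroup.m_inv_closed[OF N] by metis
qed

lemma normal_closure_eqI:
  assumes "H \<lhd> G" "S \<subseteq> H" "\<And>N. N \<lhd> G \<Longrightarrow> S \<subseteq> N \<Longrightarrow> H \<subseteq> N"
  shows "normal_closure G S = H"
  using assms unfolding normal_closure_def by blast

context valued_field
begin

lemma det_sub_one_in_val_ideal:
  fixes A :: "'a^'n::finite^'n"
  assumes "\<And>i j. A $ i $ j - mat 1 $ i $ j \<in> val_ideal v m"
  shows "det A - 1 \<in> val_ideal v m"
proof -
  have one: "mat 1 $ i $ j \<in> val_ideal v 0" for i j :: 'n
    by (simp add: mat_def val_ideal_def)
  have "A $ i $ j \<in> val_ideal v 0" for i j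
    using val_ideal_add[OF subsetD[OF val_ideal_antimono assms[of i j]] one[of i j]] by simp
  then show ?thesis
    using det_diff_in_val_ideal[of A "mat 1"] one assms by simp
qed

lemma congruence_subgroup_eq:
  assumes "uniformiser v \<pi>"
  shows "congruence_subgroup v \<pi> m = {A. \<forall>i j. A $ i $ j - mat 1 $ i $ j \<in> val_ideal v m}"
  by (simp add: congruence_subgroup_def ideal_pow_eq_val_ideal[OF assms])

lemma det_congruence_subgroup_eq:
  assumes "uniformiser v \<pi>"
  shows "det_congruence_subgroup v \<pi> m = {A \<in> carrier GL. det A - 1 \<in> val_ideal v m}"
  by (simp add: det_congruence_subgroup_def ideal_pow_eq_val_ideal[OF assms])

lemma det_congruence_subgroup_normal:
  assumes "uniformiser v \<pi>" "m \<ge> 1"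
  shows "(det_congruence_subgroup v \<pi> m :: ('a^'n::finite^'n) set) \<lhd> GL"
  using det_preimage_normal[of "{x. x - 1 \<in> val_ideal v m}"]
  by (simp add: det_congruence_subgroup_eq[OF assms(1)] principal_unit_mult
      principal_unit_inverse[OF assms(2)])

lemma congruence_subgroup_subset:
  assumes "uniformiser v \<pi>" "m \<ge> 1"
  shows "(congruence_subgroup v \<pi> m :: ('a^'n::finite^'n) set) \<subseteq> det_congruence_subgroup v \<pi> m"
  using det_sub_one_in_val_ideal principal_unit_nonzero[OF assms(2)]
  by (auto simp: congruence_subgroup_eq[OF assms(1)] det_congruence_subgroup_eq[OF assms(1)]
      invertible_det_nz)

lemma det_congruence_subgroup_subset_normal:
  assumes "uniformiser v \<pi>" and N: "N \<lhd> GL" "congruence_subgroup v \<pi> m \<subseteq> N"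
  shows "(det_congruence_subgroup v \<pi> m :: ('a^'n::finite^'n) set) \<subseteq> N"
proof
  have "\<pi> ^ m \<noteq> 0" "\<pi> ^ m \<in> val_ideal v m"
    using assms(1) by (simp_all add: uniformiser_def val_ideal_def val_power)
  then have "transvection p q (\<pi> ^ m) \<in> N" for p q :: 'n
    using N(2) by (auto simp: congruence_subgroup_eq[OF assms(1)] transvection_def mat_def)
  then have "transvections \<subseteq> N"
    using normal_subgroup_transvection[OF N(1) _ \<open>\<pi> ^ m \<noteq> 0\<close>]
    by (auto simp: transvections_def)
  fix A :: "'a^'n^'n"
  assume "A \<in> det_congruence_subgroup v \<pi> m"
  then have "invertible A" "dilation k (det A) \<in> N" for k
    using N(2)
    by (auto simp: det_congruence_subgroup_eq[OF assms(1)] congruence_subgroup_eq[OF assms(1)]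
        dilation_def mat_def)
  then show "A \<in> N"
    using subgroup_GL_memI[OF normal_imp_subgroup[OF N(1)] \<open>transvections \<subseteq> N\<close>] by blast
qed

end

theorem lemma6p18:
  fixes v :: "'a::field_char_0 \<Rightarrow> int" and \<pi> :: 'a and m :: nat
  assumes "p_adic_local_field v"
    and "uniformiser v \<pi>"
    and "m \<ge> 1"
  shows "normal_closure (GL :: ('a^'n::finite^'n) monoid) (congruence_subgroup v \<pi> m)
           = det_congruence_subgroup v \<pi> m"
proof -
  interpret valued_field v
    using assms(1) by unfold_locales (simp add: p_adic_local_field_def)
  show ?thesis
    using det_congruence_subgroup_normal[OF assms(2,3)] congruence_subgroup_subset[OF assms(2,3)]
      det_congruence_subgroup_subset_normal[OF assms(2)]
    by (rule normal_closure_eqI)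
qed

end
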